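(* Let $V$ be a vertex operator algebra of CFT type and $M=\bigoplus_{n\ge0}M(n)$ an admissible $V$-module which is strongly generated by a homogeneous subspace $W\subseteq M$. Then $M/C_2(M)$ is generated, as a module over the commutative algebra $V/C_2(V)$, by $\{w+C_2(M):w\in W\}$.
   Context: $V_0=\mathbb{C}\mathbf{1}$, $V_+=\bigoplus_{n\ge1}V_n$; $Y_M(a,z)=\sum_na_nz^{-n-1}$. $C_2(V)=\mathrm{span}\{a_{-2}b:a,b\in V\}$, $C_2(M)=\mathrm{span}\{a_{-2}v:a\in V,v\in M\}$; $V/C_2(V)$ is a commutative algebra with product $(a+C_2(V))(b+C_2(V))=a_{-1}b+C_2(V)$, and $M/C_2(M)$ is a $V/C_2(V)$-module via $(a+C_2(V)).(v+C_2(M))=a_{-1}v+C_2(M)$. $M$ is strongly generated by $W$ if $M$ is spanned by $a^1_{-n_1}\cdots a^k_{-n_k}w$ with $k\ge0$, $a^i\in V_+$ homogeneous, $n_i\ge1$, $w\in W$. *)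

theory Defs
  imports Complex_Main
begin

(* Vector spaces over the complex numbers are modelled with the library locale
   vector_space (scale :: complex => 'a => 'a); the whole type 'a is the space. *)

definition graded_direct_sum :: "(complex \<Rightarrow> 'a::ab_group_add \<Rightarrow> 'a) \<Rightarrow> ('i \<Rightarrow> 'a set) \<Rightarrow> bool" where
  "graded_direct_sum s G \<longleftrightarrow>
     (\<forall>n. module.subspace s (G n)) \<and>
     (\<forall>v. \<exists>F f. finite F \<and> (\<forall>n\<in>F. f n \<in> G n) \<and> v = (\<Sum>n\<in>F. f n)) \<and>
     (\<forall>F f. finite F \<and> (\<forall>n\<in>F. f n \<in> G n) \<and> (\<Sum>n\<in>F. f n) = 0 \<longrightarrow> (\<forall>n\<in>F. f n = 0))"

text \<open>Y a n v is the mode a_n v, i.e. Y(a,z) v = sum_n a_n v z^(-n-1).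
  Bilinearity of the vertex operator map.\<close>
definition vertex_bilinear ::
  "(complex \<Rightarrow> 'v::ab_group_add \<Rightarrow> 'v) \<Rightarrow> (complex \<Rightarrow> 'm::ab_group_add \<Rightarrow> 'm) \<Rightarrow> ('v \<Rightarrow> int \<Rightarrow> 'm \<Rightarrow> 'm) \<Rightarrow> bool" where
  "vertex_bilinear sV sM Y \<longleftrightarrow>
     (\<forall>a b n v. Y (a + b) n v = Y a n v + Y b n v) \<and>
     (\<forall>c a n v. Y (sV c a) n v = sM c (Y a n v)) \<and>
     (\<forall>a n v w. Y a n (v + w) = Y a n v + Y a n w) \<and>
     (\<forall>a n c v. Y a n (sM c v) = sM c (Y a n v))"

definition vertex_truncation :: "('v \<Rightarrow> int \<Rightarrow> 'm \<Rightarrow> 'm::zero) \<Rightarrow> bool" where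
  "vertex_truncation Y \<longleftrightarrow> (\<forall>a v. \<exists>N. \<forall>n\<ge>N. Y a n v = 0)"

text \<open>Both sums are finite by truncation: all terms with i >= N vanish as soon as
  a_{k+i} b = 0, b_{n+i} c = 0 and a_{m+i} c = 0 for i >= N, so the identity is
  stated with sums over i < N for any such N.  Y is the vertex operator of V,
  YM the one of the module (YM = Y for V itself).\<close>
definition jacobi_identity ::
  "('v \<Rightarrow> int \<Rightarrow> 'v \<Rightarrow> 'v::zero) \<Rightarrow> (complex \<Rightarrow> 'm::ab_group_add \<Rightarrow> 'm) \<Rightarrow> ('v \<Rightarrow> int \<Rightarrow> 'm \<Rightarrow> 'm) \<Rightarrow> bool" where
  "jacobi_identity Y sM YM \<longleftrightarrow>
     (\<forall>a b c m n k N.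
        (\<forall>i\<ge>N. Y a (k + int i) b = 0) \<and> (\<forall>i\<ge>N. YM b (n + int i) c = 0) \<and>
        (\<forall>i\<ge>N. YM a (m + int i) c = 0) \<longrightarrow>
        (\<Sum>i<N. sM (of_int m gchoose i) (YM (Y a (k + int i) b) (m + n - int i) c)) =
        (\<Sum>i<N. sM ((-1) ^ i * (of_int k gchoose i))
            (YM a (m + k - int i) (YM b (n + int i) c)
             - sM (if even k then 1 else -1) (YM b (n + k - int i) (YM a (m + int i) c)))))"

text \<open>Vertex operator algebra (V, Y, 1, omega) of central charge cc, with grading Vg.
  L(n) = omega_{n+1}.\<close>
definition is_VOA ::
  "(complex \<Rightarrow> 'v::ab_group_add \<Rightarrow> 'v) \<Rightarrow> (int \<Rightarrow> 'v set) \<Rightarrow> ('v \<Rightarrow> int \<Rightarrow> 'v \<Rightarrow> 'v)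
   \<Rightarrow> 'v \<Rightarrow> 'v \<Rightarrow> complex \<Rightarrow> bool" where
  "is_VOA sV Vg Y vac om cc \<longleftrightarrow>
     vector_space sV \<and>
     graded_direct_sum sV Vg \<and>
     (\<forall>n. \<exists>B. finite B \<and> Vg n \<subseteq> module.span sV B) \<and>
     (\<exists>N. \<forall>n<N. Vg n = {0}) \<and>
     vertex_bilinear sV sV Y \<and>
     vertex_truncation Y \<and>
     (\<forall>n v. Y vac n v = (if n = -1 then v else 0)) \<and>
     (\<forall>a. Y a (-1) vac = a) \<and> (\<forall>a n. n \<ge> 0 \<longrightarrow> Y a n vac = 0) \<and>
     jacobi_identity Y sV Y \<and>
     om \<in> Vg 2 \<and>
     (\<forall>m n v. Y om (m + 1) (Y om (n + 1) v) - Y om (n + 1) (Y om (m + 1) v) =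
        sV (of_int (m - n)) (Y om (m + n + 1) v) +
        (if m + n = 0 then sV ((of_int m ^ 3 - of_int m) / 12 * cc) v else 0)) \<and>
     (\<forall>n. \<forall>v\<in>Vg n. Y om 1 v = sV (of_int n) v) \<and>
     (\<forall>a n v. Y (Y om 0 a) n v = sV (- of_int n) (Y a (n - 1) v))"

definition is_CFT_type_VOA ::
  "(complex \<Rightarrow> 'v::ab_group_add \<Rightarrow> 'v) \<Rightarrow> (int \<Rightarrow> 'v set) \<Rightarrow> ('v \<Rightarrow> int \<Rightarrow> 'v \<Rightarrow> 'v)
   \<Rightarrow> 'v \<Rightarrow> 'v \<Rightarrow> complex \<Rightarrow> bool" where
  "is_CFT_type_VOA sV Vg Y vac om cc \<longleftrightarrow>
     is_VOA sV Vg Y vac om cc \<and> (\<forall>n<0. Vg n = {0}) \<and> Vg 0 = module.span sV {vac}"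

definition is_admissible_module ::
  "(complex \<Rightarrow> 'v::ab_group_add \<Rightarrow> 'v) \<Rightarrow> (int \<Rightarrow> 'v set) \<Rightarrow> ('v \<Rightarrow> int \<Rightarrow> 'v \<Rightarrow> 'v) \<Rightarrow> 'v
   \<Rightarrow> (complex \<Rightarrow> 'm::ab_group_add \<Rightarrow> 'm) \<Rightarrow> (nat \<Rightarrow> 'm set) \<Rightarrow> ('v \<Rightarrow> int \<Rightarrow> 'm \<Rightarrow> 'm) \<Rightarrow> bool" where
  "is_admissible_module sV Vg Y vac sM Mg YM \<longleftrightarrow>
     vector_space sM \<and>
     graded_direct_sum sM Mg \<and>
     vertex_bilinear sV sM YM \<and>
     vertex_truncation YM \<and>
     (\<forall>n v. YM vac n v = (if n = -1 then v else 0)) \<and>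
     jacobi_identity Y sM YM \<and>
     (\<forall>a k m n v. a \<in> Vg k \<longrightarrow> v \<in> Mg n \<longrightarrow>
        YM a m v \<in> (if k - m - 1 + int n \<ge> 0 then Mg (nat (k - m - 1 + int n)) else {0}))"

definition homogeneous_subspace :: "(complex \<Rightarrow> 'm::ab_group_add \<Rightarrow> 'm) \<Rightarrow> (nat \<Rightarrow> 'm set) \<Rightarrow> 'm set \<Rightarrow> bool" where
  "homogeneous_subspace sM Mg W \<longleftrightarrow>
     module.subspace sM W \<and>
     (\<forall>w\<in>W. \<exists>F f. finite F \<and> (\<forall>n\<in>F. f n \<in> W \<inter> Mg n) \<and> w = (\<Sum>n\<in>F. f n))"

inductive_set strong_monomials ::
  "(int \<Rightarrow> 'v set) \<Rightarrow> ('v \<Rightarrow> int \<Rightarrow> 'm \<Rightarrow> 'm) \<Rightarrow> 'm set \<Rightarrow> 'm set"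
  for Vg YM W where
  base: "w \<in> W \<Longrightarrow> w \<in> strong_monomials Vg YM W"
| step: "a \<in> Vg d \<Longrightarrow> d \<ge> 1 \<Longrightarrow> n \<ge> 1 \<Longrightarrow> v \<in> strong_monomials Vg YM W
          \<Longrightarrow> YM a (- n) v \<in> strong_monomials Vg YM W"

definition strongly_generated ::
  "(complex \<Rightarrow> 'm::ab_group_add \<Rightarrow> 'm) \<Rightarrow> (int \<Rightarrow> 'v set) \<Rightarrow> ('v \<Rightarrow> int \<Rightarrow> 'm \<Rightarrow> 'm) \<Rightarrow> 'm set \<Rightarrow> bool" where
  "strongly_generated sM Vg YM W \<longleftrightarrow> module.span sM (strong_monomials Vg YM W) = UNIV"

definition C2_space :: "(complex \<Rightarrow> 'm::ab_group_add \<Rightarrow> 'm) \<Rightarrow> ('v \<Rightarrow> int \<Rightarrow> 'm \<Rightarrow> 'm) \<Rightarrow> 'm set" where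
  "C2_space sM YM = module.span sM {YM a (-2) v | a v. True}"

text \<open>M/C_2(M) is generated, as a module over V/C_2(V) with action
  (a + C_2(V)).(v + C_2(M)) = a_{-1} v + C_2(M), by the classes w + C_2(M), w \<in> W:
  i.e. every class v + C_2(M) is a finite linear combination of classes
  (a + C_2(V)).(w + C_2(M)) = a_{-1} w + C_2(M) with a \<in> V, w \<in> W.\<close>
definition C2_quotient_generated_by ::
  "(complex \<Rightarrow> 'm::ab_group_add \<Rightarrow> 'm) \<Rightarrow> ('v \<Rightarrow> int \<Rightarrow> 'm \<Rightarrow> 'm) \<Rightarrow> 'm set \<Rightarrow> bool" where
  "C2_quotient_generated_by sM YM W \<longleftrightarrow>
     (\<forall>v. \<exists>u \<in> module.span sM {YM a (-1) w | a w. w \<in> W}. v - u \<in> C2_space sM YM)"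

end

theory Submission
  imports Defs
begin

text \<open>Modulo C_2(M) every mode a_{-n} with n >= 2 vanishes, since the translation identity
  (a_{-2} 1)_{m-1} = (1 - m) a_{m-2} expresses it through a (-2)-mode. The Jacobi identity
  with k = 0 shows that C_2(M) is stable under a_{-1}, and with k = -1 that
  a_{-1} b_{-1} w = (a_{-1} b)_{-1} w modulo C_2(M). Hence the span of the vectors a_{-1} w
  (w in W) together with C_2(M) is stable under all modes a_{-n}, n >= 1, and contains
  W = 1_{-1} W, so it contains every strong monomial and is all of M.\<close>

lemma vertex_truncation_shift:
  assumes "vertex_truncation Y"
  obtains N :: nat where "\<forall>i\<ge>N. Y a (k + int i) b = 0"
proof -
  obtain N0 where "\<forall>n\<ge>N0. Y a n b = 0"
    using assms unfolding vertex_truncation_def by blast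
  then have "\<forall>i\<ge>nat (N0 - k). Y a (k + int i) b = 0" by auto
  then show ?thesis by (rule that)
qed

locale vertex_algebra_module = M: vector_space sM
  for sV :: "complex \<Rightarrow> 'v::ab_group_add \<Rightarrow> 'v"
    and Y :: "'v \<Rightarrow> int \<Rightarrow> 'v \<Rightarrow> 'v"
    and vac :: 'v
    and sM :: "complex \<Rightarrow> 'm::ab_group_add \<Rightarrow> 'm"
    and YM :: "'v \<Rightarrow> int \<Rightarrow> 'm \<Rightarrow> 'm" +
  assumes bilinear: "vertex_bilinear sV sM YM"
    and truncation_algebra: "vertex_truncation Y"
    and truncation: "vertex_truncation YM"
    and vacuum: "YM vac n v = (if n = -1 then v else 0)"
    and creation: "Y a (-1) vac = a"
    and creation_regular: "0 \<le> n \<Longrightarrow> Y a n vac = 0"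
    and jacobi: "jacobi_identity Y sM YM"
begin

lemma mode_module_hom: "module_hom sM sM (YM a n)"
  using bilinear M.module_axioms
  unfolding module_hom_def module_hom_axioms_def vertex_bilinear_def by blast

lemma mode_zero_left: "YM 0 n v = 0"
proof -
  have "YM (0 + 0) n v = YM 0 n v + YM 0 n v"
    using bilinear unfolding vertex_bilinear_def by blast
  then show ?thesis by simp
qed

lemma mode_zero_right: "YM a n 0 = 0"
  using module_hom.zero[OF mode_module_hom] .

lemma borcherds_identity:
  obtains N :: nat where "K \<le> N"
    and "(\<Sum>i<N. sM (of_int m gchoose i) (YM (Y a (k + int i) b) (m + n - int i) c)) =
         (\<Sum>i<N. sM ((-1) ^ i * (of_int k gchoose i))
            (YM a (m + k - int i) (YM b (n + int i) c)
             - sM (if even k then 1 else -1) (YM b (n + k - int i) (YM a (m + int i) c))))"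
proof -
  obtain N1 where N1: "\<forall>i\<ge>N1. Y a (k + int i) b = 0"
    using truncation_algebra by (rule vertex_truncation_shift)
  obtain N2 where N2: "\<forall>i\<ge>N2. YM b (n + int i) c = 0"
    using truncation by (rule vertex_truncation_shift)
  obtain N3 where N3: "\<forall>i\<ge>N3. YM a (m + int i) c = 0"
    using truncation by (rule vertex_truncation_shift)
  define N where "N = max K (max N1 (max N2 N3))"
  show ?thesis
  proof (rule that)
    show "K \<le> N" unfolding N_def by simp
  next
    show "(\<Sum>i<N. sM (of_int m gchoose i) (YM (Y a (k + int i) b) (m + n - int i) c)) =
         (\<Sum>i<N. sM ((-1) ^ i * (of_int k gchoose i))
            (YM a (m + k - int i) (YM b (n + int i) c)
             - sM (if even k then 1 else -1) (YM b (n + k - int i) (YM a (m + int i) c))))"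
      using jacobi N1 N2 N3 unfolding jacobi_identity_def N_def by simp
  qed
qed

lemma translation_mode: "YM (Y a (-2) vac) (m - 1) c = sM (1 - of_int m) (YM a (m - 2) c)"
proof -
  obtain N where "2 \<le> N" and J:
    "(\<Sum>i<N. sM (of_int m gchoose i) (YM (Y a (-2 + int i) vac) (m + -1 - int i) c)) =
     (\<Sum>i<N. sM ((-1) ^ i * (of_int (-2) gchoose i))
        (YM a (m + -2 - int i) (YM vac (-1 + int i) c)
         - sM (if even (-2::int) then 1 else -1) (YM vac (-1 + -2 - int i) (YM a (m + int i) c))))"
    by (rule borcherds_identity)
  have "(\<Sum>i<N. sM (of_int m gchoose i) (YM (Y a (-2 + int i) vac) (m + -1 - int i) c)) =
        (\<Sum>i<2. sM (of_int m gchoose i) (YM (Y a (-2 + int i) vac) (m + -1 - int i) c))"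
    by (rule sum.mono_neutral_right) (use \<open>2 \<le> N\<close> in \<open>auto simp: creation_regular mode_zero_left\<close>)
  also have "\<dots> = YM (Y a (-2) vac) (m - 1) c + sM (of_int m) (YM a (m - 2) c)"
    by (simp add: numeral_2_eq_2 creation algebra_simps)
  finally have "YM (Y a (-2) vac) (m - 1) c + sM (of_int m) (YM a (m - 2) c) = YM a (m - 2) c"
    using J \<open>2 \<le> N\<close> by (simp add: sum.remove[of "{..<N}" 0] vacuum mode_zero_right)
  then show ?thesis by (simp add: M.scale_left_diff_distrib algebra_simps)
qed

lemma subspace_C2: "M.subspace (C2_space sM YM)"
  unfolding C2_space_def by simp

lemma mode_minus_two_in_C2: "YM a (-2) v \<in> C2_space sM YM"
  unfolding C2_space_def by (rule M.span_base) auto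

lemma mode_in_C2:
  assumes "m \<le> -2"
  shows "YM a m v \<in> C2_space sM YM"
proof -
  have "YM a (- (int j + 2)) v \<in> C2_space sM YM" for j a v
  proof (induction j arbitrary: a v)
    case 0
    show ?case using mode_minus_two_in_C2 by simp
  next
    case (Suc j)
    have "(of_nat j + 2 :: complex) \<noteq> 0"
      by (metis of_nat_add of_nat_eq_0_iff of_nat_numeral add_is_0 zero_neq_numeral)
    moreover have "YM (Y a (-2) vac) (- (int j + 2)) v =
                   sM (of_nat j + 2) (YM a (- (int (Suc j) + 2)) v)"
      using translation_mode[of a "- (int j + 1)" v] by (simp add: algebra_simps)
    ultimately have "YM a (- (int (Suc j) + 2)) v =
                     sM (inverse (of_nat j + 2)) (YM (Y a (-2) vac) (- (int j + 2)) v)"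
      by simp
    then show ?case using M.subspace_scale[OF subspace_C2 Suc.IH] by simp
  qed
  from this[where j = "nat (- m - 2)"] assms show ?thesis by simp
qed

lemma mode_minus_one_preserves_C2:
  assumes "x \<in> C2_space sM YM"
  shows "YM a (-1) x \<in> C2_space sM YM"
proof -
  interpret Ya: module_hom sM sM "YM a (-1)" by (rule mode_module_hom)
  have "YM a (-1) (YM b (-2) v) \<in> C2_space sM YM" for b v
  proof -
    obtain N where "1 \<le> N" and J:
      "(\<Sum>i<N. sM (of_int (-1) gchoose i) (YM (Y a (0 + int i) b) (-1 + -2 - int i) v)) =
       (\<Sum>i<N. sM ((-1) ^ i * (of_int 0 gchoose i))
          (YM a (-1 + 0 - int i) (YM b (-2 + int i) v)
           - sM (if even (0::int) then 1 else -1) (YM b (-2 + 0 - int i) (YM a (-1 + int i) v))))"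
      by (rule borcherds_identity)
    have "YM a (-1) (YM b (-2) v) - YM b (-2) (YM a (-1) v) =
          (\<Sum>i<N. sM (of_int (-1) gchoose i) (YM (Y a (int i) b) (-3 - int i) v))"
      using J \<open>1 \<le> N\<close> by (simp add: sum.remove[of "{..<N}" 0] gbinomial_0_left)
    also have "\<dots> \<in> C2_space sM YM"
      by (intro M.subspace_sum[OF subspace_C2] M.subspace_scale[OF subspace_C2] mode_in_C2) simp
    finally have commutator: "YM a (-1) (YM b (-2) v) - YM b (-2) (YM a (-1) v) \<in> C2_space sM YM" .
    show ?thesis
      using M.subspace_add[OF subspace_C2 commutator mode_minus_two_in_C2[of b "YM a (-1) v"]] by simp
  qed
  then have "YM a (-1) ` {YM b (-2) v | b v. True} \<subseteq> C2_space sM YM" by blast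
  then have "M.span (YM a (-1) ` {YM b (-2) v | b v. True}) \<subseteq> C2_space sM YM"
    by (rule M.span_minimal[OF _ subspace_C2])
  then show ?thesis
    using assms unfolding C2_space_def Ya.span_image by blast
qed

lemma associativity_mod_C2:
  "YM a (-1) (YM b (-1) w) - YM (Y a (-1) b) (-1) w \<in> C2_space sM YM"
proof -
  obtain N where "1 \<le> N" and J:
    "(\<Sum>i<N. sM (of_int 0 gchoose i) (YM (Y a (-1 + int i) b) (0 + -1 - int i) w)) =
     (\<Sum>i<N. sM ((-1) ^ i * (of_int (-1) gchoose i))
        (YM a (0 + -1 - int i) (YM b (-1 + int i) w)
         - sM (if even (-1::int) then 1 else -1) (YM b (-1 + -1 - int i) (YM a (0 + int i) w))))"
    by (rule borcherds_identity)
  define R where "R = (\<Sum>i\<in>{..<N} - {0}. sM ((-1) ^ i * (of_int (-1) gchoose i))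
        (YM a (-1 - int i) (YM b (-1 + int i) w) + YM b (-2 - int i) (YM a (int i) w)))"
  have "YM (Y a (-1) b) (-1) w = YM a (-1) (YM b (-1) w) + YM b (-2) (YM a 0 w) + R"
    using J \<open>1 \<le> N\<close> unfolding R_def
    by (simp add: sum.remove[of "{..<N}" 0] gbinomial_0_left M.scale_minus_left)
  then have "YM a (-1) (YM b (-1) w) - YM (Y a (-1) b) (-1) w = - (YM b (-2) (YM a 0 w) + R)"
    by (simp add: algebra_simps)
  moreover have "R \<in> C2_space sM YM"
    unfolding R_def
    by (intro M.subspace_sum[OF subspace_C2] M.subspace_scale[OF subspace_C2]
        M.subspace_add[OF subspace_C2] mode_in_C2) auto
  then have "- (YM b (-2) (YM a 0 w) + R) \<in> C2_space sM YM"
    by (intro M.subspace_neg[OF subspace_C2] M.subspace_add[OF subspace_C2 mode_minus_two_in_C2])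
  ultimately show ?thesis by simp
qed

abbreviation C2_generators :: "'m set \<Rightarrow> 'm set" where
  "C2_generators W \<equiv> {YM a (-1) w | a w. w \<in> W} \<union> C2_space sM YM"

lemma C2_quotient_generated_by_iff_span:
  "C2_quotient_generated_by sM YM W \<longleftrightarrow> M.span (C2_generators W) = UNIV"
proof -
  let ?G = "{YM a (-1) w | a w. w \<in> W}"
  have "M.span (C2_generators W) = {u + c | u c. u \<in> M.span ?G \<and> c \<in> C2_space sM YM}"
    unfolding M.span_Un M.span_eq_iff[THEN iffD2, OF subspace_C2] ..
  also have "\<dots> = {v. \<exists>u\<in>M.span ?G. v - u \<in> C2_space sM YM}"
  proof (intro set_eqI iffI)
    fix v assume "v \<in> {u + c | u c. u \<in> M.span ?G \<and> c \<in> C2_space sM YM}"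
    then show "v \<in> {v. \<exists>u\<in>M.span ?G. v - u \<in> C2_space sM YM}" by force
  next
    fix v assume "v \<in> {v. \<exists>u\<in>M.span ?G. v - u \<in> C2_space sM YM}"
    then obtain u where "u \<in> M.span ?G" and "v - u \<in> C2_space sM YM" by blast
    moreover have "v = u + (v - u)" by simp
    ultimately show "v \<in> {u + c | u c. u \<in> M.span ?G \<and> c \<in> C2_space sM YM}" by blast
  qed
  finally show ?thesis
    unfolding C2_quotient_generated_by_def by blast
qed

lemma mode_minus_one_preserves_span_C2_generators:
  assumes "x \<in> M.span (C2_generators W)"
  shows "YM a (-1) x \<in> M.span (C2_generators W)"
proof -
  interpret Ya: module_hom sM sM "YM a (-1)" by (rule mode_module_hom)
  have "YM a (-1) g \<in> M.span (C2_generators W)" if "g \<in> C2_generators W" for g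
    using that
  proof
    assume "g \<in> {YM b (-1) w | b w. w \<in> W}"
    then obtain b w where g: "g = YM b (-1) w" and "w \<in> W" by blast
    then have "YM (Y a (-1) b) (-1) w \<in> M.span (C2_generators W)"
      by (intro M.span_base) blast
    moreover have "YM a (-1) g - YM (Y a (-1) b) (-1) w \<in> M.span (C2_generators W)"
      unfolding g by (intro M.span_base) (simp add: associativity_mod_C2)
    ultimately show ?thesis
      using M.span_add by fastforce
  next
    assume "g \<in> C2_space sM YM"
    then show ?thesis
      by (intro M.span_base) (simp add: mode_minus_one_preserves_C2)
  qed
  then have "M.span (YM a (-1) ` C2_generators W) \<subseteq> M.span (C2_generators W)"
    by (intro M.span_minimal) auto
  then show ?thesis
    using assms unfolding Ya.span_image by blast
qed

lemma strong_monomials_subset_span_C2_generators: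
  "strong_monomials Vg YM W \<subseteq> M.span (C2_generators W)"
proof
  fix x assume "x \<in> strong_monomials Vg YM W"
  then show "x \<in> M.span (C2_generators W)"
  proof induction
    case (base w)
    then have "YM vac (-1) w \<in> C2_generators W" by blast
    then show ?case by (simp add: vacuum M.span_base)
  next
    case (step a d n v)
    show ?case
    proof (cases "n = 1")
      case True
      then show ?thesis
        using mode_minus_one_preserves_span_C2_generators[OF step.IH] by simp
    next
      case False
      with \<open>n \<ge> 1\<close> have "YM a (- n) v \<in> C2_space sM YM" by (simp add: mode_in_C2)
      then show ?thesis by (simp add: M.span_base)
    qed
  qed
qed

theorem C2_quotient_generated_if_strongly_generated:
  assumes "strongly_generated sM Vg YM W"
  shows "C2_quotient_generated_by sM YM W"
proof -
  have "UNIV = M.span (strong_monomials Vg YM W)"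
    using assms unfolding strongly_generated_def by simp
  also have "\<dots> \<subseteq> M.span (C2_generators W)"
    by (rule M.span_minimal[OF strong_monomials_subset_span_C2_generators M.subspace_span])
  finally show ?thesis
    unfolding C2_quotient_generated_by_iff_span by blast
qed

end

lemma vertex_algebra_module_if_admissible:
  assumes "is_VOA sV Vg Y vac om cc"
    and "is_admissible_module sV Vg Y vac sM Mg YM"
  shows "vertex_algebra_module sV Y vac sM YM"
  using assms unfolding is_VOA_def is_admissible_module_def
    vertex_algebra_module_def vertex_algebra_module_axioms_def
  by blast

theorem lemma4p5:
  fixes sV :: "complex \<Rightarrow> 'v::ab_group_add \<Rightarrow> 'v"
    and Vg :: "int \<Rightarrow> 'v set"
    and Y :: "'v \<Rightarrow> int \<Rightarrow> 'v \<Rightarrow> 'v"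
    and vac om :: 'v and cc :: complex
    and sM :: "complex \<Rightarrow> 'm::ab_group_add \<Rightarrow> 'm"
    and Mg :: "nat \<Rightarrow> 'm set"
    and YM :: "'v \<Rightarrow> int \<Rightarrow> 'm \<Rightarrow> 'm"
    and W :: "'m set"
  assumes "is_CFT_type_VOA sV Vg Y vac om cc"
    and "is_admissible_module sV Vg Y vac sM Mg YM"
    and "homogeneous_subspace sM Mg W"
    and "strongly_generated sM Vg YM W"
  shows "C2_quotient_generated_by sM YM W"
proof -
  have "is_VOA sV Vg Y vac om cc"
    using assms(1) unfolding is_CFT_type_VOA_def by simp
  then interpret vertex_algebra_module sV Y vac sM YM
    using assms(2) by (rule vertex_algebra_module_if_admissible)
  show ?thesis
    using assms(4) by (rule C2_quotient_generated_if_strongly_generated)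
qed

end
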